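(* In Spekkens' toy theory, for two toy bits $A$ and $S$, there is no reversible transformation $U$ such that $$U(0_A\otimes 0_S)=0_A\otimes 0_S\quad\text{and}\quad U(1_A\otimes 0_S)=0_A\otimes +_S .$$
   Context: A toy bit has four ontic states; identify them with $(q,p)\in\mathbb{Z}_2^2$, labelled $1=(0,0),2=(0,1),3=(1,0),4=(1,1)$. The toy states used are the sets of compatible ontic states $0=\{1,2\}$ ($q=0$), $1=\{3,4\}$ ($q=1$), $+=\{1,3\}$ ($p=0$). For two toy bits the ontic states are pairs (16 of them), ontic space $\mathbb{Z}_2^4$ with coordinates $(q_A,p_A,q_S,p_S)$, and $x_A\otimes y_S$ denotes the product set $x\times y$. Valid epistemic states of the pair are the sets $V^\perp+\vec v$ where $V\subseteq\mathbb{Z}_2^4$ is a subspace with $[\vec f,\vec g]=f_1g_2-f_2g_1+f_3g_4-f_4g_3=0$ (mod 2) for all $\vec f,\vec g\in V$, $\vec v\in\mathbb{Z}_2^4$, and $V^\perp=\{\vec m:\vec f^T\vec m=0\ \forall\vec f\in V\}$. A reversible transformation is a permutation of the 16 ontic states that maps every valid epistemic state to a valid epistemic state; it acts on epistemic states by mapping the set of compatible ontic states. *)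

theory Defs
  imports Main "HOL-Library.Z2"
begin

type_synonym ontic1 = "bit \<times> bit"
type_synonym ontic2 = "bit \<times> bit \<times> bit \<times> bit"

definition tb0 :: "ontic1 set" where "tb0 = {(q,p). q = 0}"
definition tb1 :: "ontic1 set" where "tb1 = {(q,p). q = 1}"
definition tbplus :: "ontic1 set" where "tbplus = {(q,p). p = 0}"

definition tensor :: "ontic1 set \<Rightarrow> ontic1 set \<Rightarrow> ontic2 set" where
  "tensor x y = {(qa,pa,qs,ps). (qa,pa) \<in> x \<and> (qs,ps) \<in> y}"

definition vadd :: "ontic2 \<Rightarrow> ontic2 \<Rightarrow> ontic2" where
  "vadd f g = (case f of (f1,f2,f3,f4) \<Rightarrow> case g of (g1,g2,g3,g4) \<Rightarrow>
     (f1+g1, f2+g2, f3+g3, f4+g4))"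

definition vzero :: ontic2 where "vzero = (0,0,0,0)"

definition dotp :: "ontic2 \<Rightarrow> ontic2 \<Rightarrow> bit" where
  "dotp f g = (case f of (f1,f2,f3,f4) \<Rightarrow> case g of (g1,g2,g3,g4) \<Rightarrow>
     f1*g1 + f2*g2 + f3*g3 + f4*g4)"

definition symp :: "ontic2 \<Rightarrow> ontic2 \<Rightarrow> bit" where
  "symp f g = (case f of (f1,f2,f3,f4) \<Rightarrow> case g of (g1,g2,g3,g4) \<Rightarrow>
     f1*g2 - f2*g1 + f3*g4 - f4*g3)"

text \<open>Subspaces of Z_2^4 (scalars are 0,1, so closure under addition and 0 suffices).\<close>
definition subspace2 :: "ontic2 set \<Rightarrow> bool" where
  "subspace2 V \<longleftrightarrow> vzero \<in> V \<and> (\<forall>f\<in>V. \<forall>g\<in>V. vadd f g \<in> V)"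

definition isotropic :: "ontic2 set \<Rightarrow> bool" where
  "isotropic V \<longleftrightarrow> subspace2 V \<and> (\<forall>f\<in>V. \<forall>g\<in>V. symp f g = 0)"

definition perp :: "ontic2 set \<Rightarrow> ontic2 set" where
  "perp V = {m. \<forall>f\<in>V. dotp f m = 0}"

definition valid_epistemic :: "ontic2 set \<Rightarrow> bool" where
  "valid_epistemic E \<longleftrightarrow> (\<exists>V v. isotropic V \<and> E = (\<lambda>m. vadd m v) ` perp V)"

definition reversible :: "(ontic2 \<Rightarrow> ontic2) \<Rightarrow> bool" where
  "reversible U \<longleftrightarrow> bij U \<and> (\<forall>E. valid_epistemic E \<longrightarrow> valid_epistemic (U ` E))"

end

theory Submission
  imports Defs
begin

text \<open>A reversible transformation is a bijection of the ontic states, so it maps disjoint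
  epistemic states to disjoint ones; only this injectivity is needed, not the preservation
  of valid epistemic states. But \<open>0\<^sub>A \<otimes> 0\<^sub>S\<close> and \<open>1\<^sub>A \<otimes> 0\<^sub>S\<close> are disjoint, whereas
  \<open>0\<^sub>A \<otimes> 0\<^sub>S\<close> and \<open>0\<^sub>A \<otimes> +\<^sub>S\<close> share the ontic state \<open>(0,0,0,0)\<close>.\<close>

lemma tensor_Int: "tensor x y \<inter> tensor x' y' = tensor (x \<inter> x') (y \<inter> y')"
  by (auto simp: tensor_def)

lemma tensor_eq_empty_iff: "tensor x y = {} \<longleftrightarrow> x = {} \<or> y = {}"
  by (fastforce simp: tensor_def)

lemma tb0_Int_tb1: "tb0 \<inter> tb1 = {}"
  by (auto simp: tb0_def tb1_def)

lemma tb0_Int_tbplus_nonempty: "tb0 \<inter> tbplus \<noteq> {}"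
proof -
  have "(0, 0) \<in> tb0 \<inter> tbplus"
    by (simp add: tb0_def tbplus_def)
  then show ?thesis
    by blast
qed

lemma reversible_imp_inj: "reversible U \<Longrightarrow> inj U"
  by (simp add: reversible_def bij_def)

theorem corollary1:
  shows "\<not> (\<exists>U. reversible U \<and> U ` tensor tb0 tb0 = tensor tb0 tb0
                \<and> U ` tensor tb1 tb0 = tensor tb0 tbplus)"
proof
  assume "\<exists>U. reversible U \<and> U ` tensor tb0 tb0 = tensor tb0 tb0
                \<and> U ` tensor tb1 tb0 = tensor tb0 tbplus"
  then obtain U where "reversible U"
    and U00: "U ` tensor tb0 tb0 = tensor tb0 tb0"
    and U10: "U ` tensor tb1 tb0 = tensor tb0 tbplus"
    by blast
  have "tensor tb0 tb0 \<inter> tensor tb0 tbplus = U ` (tensor tb0 tb0 \<inter> tensor tb1 tb0)"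
    using image_Int[OF reversible_imp_inj[OF \<open>reversible U\<close>]] U00 U10 by simp
  also have "\<dots> = {}"
    by (simp add: tensor_Int tb0_Int_tb1 tensor_eq_empty_iff)
  finally show False
    using tb0_Int_tbplus_nonempty by (simp add: tensor_Int tensor_eq_empty_iff)
qed

end
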